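(* Let $p$ be a prime number and let $d>1$ be an integer. Let $T_d$ be the $d$-th Chebyshev polynomial of the first kind, viewed as a self-map of $\mathbb{A}^1(\mathbb{F}_p)=\mathbb{F}_p$ (coefficients reduced modulo $p$), and extended to $\mathbb{P}^1(\mathbb{F}_p)=\mathbb{F}_p\cup\{\infty\}$ by $T_d(\infty)=\infty$. Let $m^-$ be the largest divisor of $p-1$ that is relatively prime to $d$, and $m^+$ the largest divisor of $p+1$ that is relatively prime to $d$. Then $$\#\mathrm{Per}(T_d,\mathbb{A}^1(\mathbb{F}_p))=\frac{m^-+m^+}{2},\qquad \#\mathrm{Per}(T_d,\mathbb{P}^1(\mathbb{F}_p))=\frac{m^-+m^+}{2}+1.$$
   Context: The $d$-th Chebyshev polynomial of the first kind $T_d\in\mathbb{Z}[z]$ is the monic degree-$d$ polynomial satisfying $T_d(z+z^{-1})=z^d+z^{-d}$. For a self-map $f$ of a finite set $S$, a point $x$ is periodic if $f^n(x)=x$ for some $n\ge1$, and $\mathrm{Per}(f,S)$ is the set of periodic points of $f$ in $S$. *)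

theory Defs
  imports "HOL-Computational_Algebra.Polynomial"
begin

(* Chebyshev polynomial of the first kind in the normalisation of the paper:
   the monic degree-d integer polynomial with T_d(z + 1/z) = z^d + z^(-d). *)
fun cheb :: "nat \<Rightarrow> int poly" where
  "cheb 0 = [:2:]"
| "cheb (Suc 0) = [:0, 1:]"
| "cheb (Suc (Suc n)) = [:0, 1:] * cheb (Suc n) - cheb n"

definition cheb_Fp :: "nat \<Rightarrow> nat \<Rightarrow> int \<Rightarrow> int" where
  "cheb_Fp p d x = poly (cheb d) x mod int p"

(* T_d acting on P^1(F_p) = F_p \<union> {\<infinity>}, with None playing the role of \<infinity> *)
definition cheb_P1 :: "nat \<Rightarrow> nat \<Rightarrow> int option \<Rightarrow> int option" where
  "cheb_P1 p d x = (case x of None \<Rightarrow> None | Some y \<Rightarrow> Some (cheb_Fp p d y))"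

definition A1_Fp :: "nat \<Rightarrow> int set" where
  "A1_Fp p = {0..<int p}"

definition P1_Fp :: "nat \<Rightarrow> int option set" where
  "P1_Fp p = insert None (Some ` A1_Fp p)"

definition Per :: "('a \<Rightarrow> 'a) \<Rightarrow> 'a set \<Rightarrow> 'a set" where
  "Per f S = {x \<in> S. \<exists>n\<ge>1. (f ^^ n) x = x}"

definition coprime_part :: "nat \<Rightarrow> nat \<Rightarrow> nat" where
  "coprime_part n d = Max {k. k dvd n \<and> coprime k d}"

end

(*
  Let K be the field with p^2 elements, Fp_star the units of its prime field and U its group of
  norm-one elements.  The map z |-> z + 1/z sends Fp_star and U into F_p with fibres {z, 1/z};
  counting these fibres forces |U| = p + 1 and shows that the map is onto F_p.  Since
  T_d(z + 1/z) = z^d + z^(-d), the point z + 1/z is periodic for T_d iff z is periodic for the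
  power map z |-> z^d, i.e. iff the order of z is prime to d, i.e. iff z^(m-) = 1 (z in Fp_star)
  or z^(m+) = 1 (z in U).  The cyclic groups Fp_star and U contain exactly m- and m+ such roots,
  and pairing z with 1/z (whose fixed points +1, -1 lie in both root sets or in neither) gives
  2 #Per = m- + m+.  On P^1 the point at infinity is one more fixed point.
*)
theory Submission
  imports Defs "HOL-Algebra.IntRing" "HOL-Number_Theory.Residues"
begin

lemma card_le_card_image_mult:
  assumes "finite X" and "\<And>x. x \<in> X \<Longrightarrow> card {y\<in>X. f y = f x} \<le> k"
  shows "card X \<le> card (f ` X) * k"
proof -
  have X: "X = (\<Union>v\<in>f ` X. {y\<in>X. f y = v})" by auto
  have "card X \<le> (\<Sum>v\<in>f ` X. card {y\<in>X. f y = v})"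
    by (subst X) (rule card_UN_le, use assms in simp)
  also have "\<dots> \<le> (\<Sum>v\<in>f ` X. k)"
    by (rule sum_mono) (use assms in auto)
  finally show ?thesis by simp
qed

lemma card_image_fibres_involution:
  assumes S: "finite S" and i_closed: "\<And>z. z \<in> S \<Longrightarrow> i z \<in> S"
    and i_i: "\<And>z. z \<in> S \<Longrightarrow> i (i z) = z"
    and fibres: "\<And>z w. z \<in> S \<Longrightarrow> w \<in> S \<Longrightarrow> f z = f w \<longleftrightarrow> w = z \<or> w = i z"
  shows "2 * card (f ` S) = card S + card {z\<in>S. i z = z}"
proof -
  define fib where "fib v = {y\<in>S. f y = v}" for v
  have "card S = (\<Sum>v\<in>f ` S. card (fib v))"
    by (subst card_UN_disjoint[symmetric])
      (use S in \<open>auto simp: fib_def intro: arg_cong[where f = card]\<close>)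
  moreover have "card {z\<in>S. i z = z} = (\<Sum>v\<in>f ` S. card (fib v \<inter> {z. i z = z}))"
    by (subst card_UN_disjoint[symmetric])
      (use S in \<open>auto simp: fib_def intro: arg_cong[where f = card]\<close>)
  moreover have "card (fib v) + card (fib v \<inter> {z. i z = z}) = 2" if "v \<in> f ` S" for v
  proof -
    obtain z where z: "z \<in> S" "v = f z" using \<open>v \<in> f ` S\<close> by auto
    have fib_v: "fib v = {z, i z}" using fibres z i_closed i_i by (auto simp: fib_def)
    show ?thesis
      using i_i[OF z(1)] by (cases "i z = z") (auto simp: fib_v)
  qed
  ultimately have "card S + card {z\<in>S. i z = z} = (\<Sum>v\<in>f ` S. 2)"
    by (simp add: sum.distrib[symmetric])
  then show ?thesis by simp
qed

lemma funpow_map_option: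
  fixes f :: "'a \<Rightarrow> 'a"
  shows "(map_option f ^^ n) x = map_option (f ^^ n) x"
  by (induction n arbitrary: x) (simp_all add: option.map_comp option.map_id)

lemma Per_map_option:
  "Per (map_option f) (insert None (Some ` S)) = insert None (Some ` Per f S)"
  by (auto simp: Per_def funpow_map_option intro: exI[of _ 1])

section \<open>The largest divisor prime to \<open>d\<close>\<close>

lemma finite_coprime_divisors: "n > 0 \<Longrightarrow> finite {k. k dvd n \<and> coprime k d}"
  for n :: nat by (auto intro: finite_subset[of _ "{..n}"] dest: dvd_imp_le)

lemma coprime_part_dvd_and_coprime:
  assumes "n > 0"
  shows "coprime_part n d dvd n \<and> coprime (coprime_part n d) d"
proof -
  have "coprime_part n d \<in> {k. k dvd n \<and> coprime k d}"
    unfolding coprime_part_def using finite_coprime_divisors[OF assms] by (intro Max_in) auto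
  then show ?thesis by simp
qed

lemma coprime_part_dvd: "n > 0 \<Longrightarrow> coprime_part n d dvd n"
  using coprime_part_dvd_and_coprime by blast

lemma coprime_part_coprime: "n > 0 \<Longrightarrow> coprime (coprime_part n d) d"
  using coprime_part_dvd_and_coprime by blast

lemma coprime_part_pos: "n > 0 \<Longrightarrow> coprime_part n d > 0"
  using coprime_part_dvd dvd_pos_nat by blast

lemma dvd_coprime_part:
  assumes n: "n > 0" and g: "g dvd n" "coprime g d"
  shows "g dvd coprime_part n d"
proof -
  let ?m = "coprime_part n d" and ?l = "lcm g (coprime_part n d)"
  have "?l dvd n" "coprime ?l d"
    using g coprime_part_dvd[OF n] coprime_part_coprime[OF n]
    by (auto intro: coprime_divisors[of ?l "g * ?m" d d])
  then have "?l \<le> ?m"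
    unfolding coprime_part_def by (intro Max_ge[OF finite_coprime_divisors[OF n]]) simp
  moreover have "?m \<le> ?l"
    using g n coprime_part_pos[OF n] by (intro dvd_imp_le) (auto simp: lcm_pos_nat dvd_pos_nat)
  ultimately have "?l = ?m" by simp
  then show ?thesis by (metis dvd_lcm1)
qed

lemma even_coprime_part_iff:
  assumes "n > 0"
  shows "even (coprime_part n d) \<longleftrightarrow> even n \<and> odd d"
  using coprime_part_dvd[OF assms] coprime_part_coprime[OF assms] dvd_coprime_part[OF assms, of 2]
  by (metis coprime_left_2_iff_odd dvd_trans coprime_divisors dvd_refl)

text \<open>\<open>x\<close> is periodic for \<open>x \<mapsto> x\<^sup>d\<close> iff \<open>ord x\<close> is prime to \<open>d\<close>; then
  \<open>d\<^sup>k \<equiv> 1\<close> modulo \<open>ord x\<close> for \<open>k = \<phi>(ord x)\<close>.\<close>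

lemma (in group) power_map_periodic_iff:
  assumes x: "x \<in> carrier G" and xn: "x [^] n = \<one>" and n: "n > 0" and d: "d > 0"
  shows "(\<exists>k\<ge>1. x [^] (d ^ k) = x) \<longleftrightarrow> x [^] coprime_part n d = \<one>"
proof -
  have fixed_iff: "x [^] (d ^ k) = x \<longleftrightarrow> ord x dvd d ^ k - 1" for k
  proof -
    have "x [^] (d ^ k) = x [^] (d ^ k - 1) \<otimes> x"
      using d x by (metis Suc_diff_1 nat_pow_Suc zero_less_power)
    then have "x [^] (d ^ k) = x \<longleftrightarrow> x [^] (d ^ k - 1) = \<one>"
      using x by simp
    then show ?thesis using pow_eq_id[OF x] by simp
  qed
  have ord_n: "ord x dvd n" using pow_eq_id[OF x] xn by simp
  show ?thesis
  proof
    assume "\<exists>k\<ge>1. x [^] (d ^ k) = x"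
    then obtain k where k: "k \<ge> 1" "ord x dvd d ^ k - 1" using fixed_iff by blast
    have "coprime (d ^ k - 1) d"
      using k(1) d
      by (intro coprime_divisors[OF dvd_refl _ coprime_diff_one_left_nat]) (auto simp: dvd_power)
    then have "coprime (ord x) d" using coprime_divisors[OF k(2) dvd_refl] by blast
    then show "x [^] coprime_part n d = \<one>"
      using pow_eq_id[OF x] dvd_coprime_part[OF n ord_n] by simp
  next
    assume "x [^] coprime_part n d = \<one>"
    then have ord_m: "ord x dvd coprime_part n d" using pow_eq_id[OF x] by simp
    let ?k = "totient (coprime_part n d)"
    have "[d ^ ?k = 1] (mod coprime_part n d)"
      using coprime_part_coprime[OF n] by (intro euler_theorem) (simp add: coprime_commute)
    then have "coprime_part n d dvd d ^ ?k - 1"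
      using d by (simp add: cong_altdef_nat)
    then have "x [^] (d ^ ?k) = x" using fixed_iff dvd_trans[OF ord_m] by blast
    moreover have "?k \<ge> 1" using coprime_part_pos[OF n] by (simp add: Suc_le_eq)
    ultimately show "\<exists>k\<ge>1. x [^] (d ^ k) = x" by blast
  qed
qed

lemma (in group) subgroup_pow_card_eq_one:
  assumes H: "subgroup H G" and x: "x \<in> H"
  shows "x [^] card H = \<one>"
proof -
  interpret H: group "G\<lparr>carrier := H\<rparr>" by (rule subgroup_imp_group[OF H])
  have "x [^]\<^bsub>G\<lparr>carrier := H\<rparr>\<^esub> order (G\<lparr>carrier := H\<rparr>) = \<one>"
    using H.pow_order_eq_1[of x] x by simp
  then show ?thesis
    by (simp add: order_def nat_pow_consistent[symmetric])
qed

lemma (in group) subgroup_nat_pow_closed: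
  assumes "subgroup H G" "h \<in> H"
  shows "h [^] (n::nat) \<in> H"
  using subgroup_int_pow_closed[OF assms, of "int n"] by (simp add: int_pow_int)

lemma (in cring) power_sum_recurrence:
  assumes z: "z \<in> carrier R" and w: "w \<in> carrier R" and zw: "z \<otimes> w = \<one>"
  shows "(z \<oplus> w) \<otimes> (z [^] Suc n \<oplus> w [^] Suc n) \<ominus> (z [^] n \<oplus> w [^] n)
       = z [^] Suc (Suc n) \<oplus> w [^] Suc (Suc n)"
proof -
  have "(z \<oplus> w) \<otimes> (a \<otimes> z \<oplus> b \<otimes> w) \<ominus> (a \<oplus> b)
      = a \<otimes> z \<otimes> z \<oplus> b \<otimes> w \<otimes> w \<oplus> (z \<otimes> w \<ominus> \<one>) \<otimes> (a \<oplus> b)"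
    if "a \<in> carrier R" "b \<in> carrier R" for a b
    using z w that by algebra
  then show ?thesis using z w zw by (simp add: a_minus_def r_neg)
qed

lemma (in cring) ring_hom_poly_cheb:
  assumes h: "h \<in> ring_hom \<Z> R" and z: "z \<in> Units R" and x: "h x = z \<oplus> inv z"
  shows "h (poly (cheb n) x) = z [^] n \<oplus> inv z [^] n"
proof (induction n rule: cheb.induct)
  interpret h: ring_hom_cring \<Z> R h
    by (intro ring_hom_cringI ring_hom_ringI2 int_is_cring is_cring cring.axioms h)
  have hom_diff: "h (a - b) = h a \<ominus> h b" for a b
    using h.hom_add[of a "- b"] h.hom_a_inv[of b] by (simp add: a_minus_def int_a_inv_eq int_add_eq)
  {
    case 1
    show ?case using h.hom_add[of 1 1] by (simp add: int_add_eq numeral_2_eq_2)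
  next
    case 2
    show ?case using x z by (simp add: Units_closed)
  next
    case (3 n)
    show ?case
      using 3 power_sum_recurrence[of z "inv z" n] z x Units_closed[OF z]
      by (simp add: hom_diff h.hom_mult[of x, simplified])
  }
qed

lemma (in cring) Units_inv_pow:
  assumes z: "z \<in> Units R"
  shows "inv z [^] (n::nat) = inv (z [^] n)"
proof -
  have "z [^] n \<otimes> inv z [^] n = \<one>"
    using z by (simp add: nat_pow_distrib[symmetric] Units_closed)
  then show ?thesis using z by (intro comm_inv_char[symmetric]) (auto simp: Units_closed)
qed

lemma (in ring) minus_one_pow_eq_one_iff:
  assumes "\<ominus> \<one> \<noteq> \<one>"
  shows "(\<ominus> \<one>) [^] (n::nat) = \<one> \<longleftrightarrow> even n"
proof -
  have "(\<ominus> \<one>) [^] n = (if even n then \<one> else \<ominus> \<one>)"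
    by (induction n) (auto simp: l_minus r_minus)
  then show ?thesis using assms by simp
qed

lemma (in field) add_inv_eq_add_inv_iff:
  assumes z: "z \<in> Units R" and w: "w \<in> Units R"
  shows "z \<oplus> inv z = w \<oplus> inv w \<longleftrightarrow> w = z \<or> w = inv z"
proof -
  have zc: "z \<in> carrier R" and wc: "w \<in> carrier R" using z w by auto
  have "z \<otimes> w \<otimes> ((z \<oplus> a) \<ominus> (w \<oplus> b))
      = (z \<ominus> w) \<otimes> (z \<otimes> w \<ominus> \<one>) \<oplus> w \<otimes> (z \<otimes> a \<ominus> \<one>) \<ominus> z \<otimes> (w \<otimes> b \<ominus> \<one>)"
    if "a \<in> carrier R" "b \<in> carrier R" for a b
    using zc wc that by algebra
  then have factor: "z \<otimes> w \<otimes> ((z \<oplus> inv z) \<ominus> (w \<oplus> inv w)) = (z \<ominus> w) \<otimes> (z \<otimes> w \<ominus> \<one>)"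
    using z w by (simp add: a_minus_def r_neg Units_closed)
  have "z \<oplus> inv z = w \<oplus> inv w \<longleftrightarrow> z \<otimes> w \<otimes> ((z \<oplus> inv z) \<ominus> (w \<oplus> inv w)) = \<zero>"
    using z w zc wc by (simp add: integral_iff r_right_minus_eq field_Units)
  also have "\<dots> \<longleftrightarrow> z = w \<or> z \<otimes> w = \<one>"
    using zc wc by (simp add: factor integral_iff r_right_minus_eq)
  also have "\<dots> \<longleftrightarrow> w = z \<or> w = inv z"
    using z w by (metis Units_closed Units_r_inv comm_inv_char)
  finally show ?thesis .
qed

lemma (in domain) inv_eq_self_iff:
  assumes "z \<in> Units R"
  shows "inv z = z \<longleftrightarrow> z = \<one> \<or> z = \<ominus> \<one>"
proof
  assume "z = \<one> \<or> z = \<ominus> \<one>"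
  then show "inv z = z" by (auto intro: comm_inv_char simp: l_minus r_minus)
qed (use assms inv_eq_self in metis)

lemma (in field) card_power_fibre_le:
  assumes fin: "finite (carrier R)" and x: "x \<in> Units R" and q: "q > 0"
  shows "card {y \<in> Units R. y [^] q = x [^] q} \<le> q"
proof -
  have "card {y \<in> Units R. y [^] q = x [^] q} \<le> card {w \<in> carrier R. w [^] q = \<one>}"
  proof (rule card_inj_on_le[where f = "\<lambda>y. y \<otimes> inv x"])
    show "inj_on (\<lambda>y. y \<otimes> inv x) {y \<in> Units R. y [^] q = x [^] q}"
      using x Units_inv_Units[OF x] by (intro inj_onI) (auto simp: m_rcancel field_Units)
    show "(\<lambda>y. y \<otimes> inv x) ` {y \<in> Units R. y [^] q = x [^] q} \<subseteq> {w \<in> carrier R. w [^] q = \<one>}"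
    proof (intro image_subsetI CollectI conjI)
      fix y assume "y \<in> {y \<in> Units R. y [^] q = x [^] q}"
      then have y: "y \<in> Units R" "y [^] q = x [^] q" by auto
      have "(y \<otimes> inv x) [^] q = x [^] q \<otimes> inv x [^] q"
        using x y by (simp add: nat_pow_distrib Units_closed)
      also have "\<dots> = \<one>" using x by (simp add: nat_pow_distrib[symmetric] Units_closed)
      finally show "(y \<otimes> inv x) [^] q = \<one>" .
      show "y \<otimes> inv x \<in> carrier R" using x y by (simp add: Units_closed)
    qed
    show "finite {w \<in> carrier R. w [^] q = \<one>}" using fin by simp
  qed
  also have "\<dots> \<le> q" using num_roots_le_deg[OF fin] q by simp
  finally show ?thesis .
qed

lemma (in field) subgroup_mult_of_subset_Units:
  "subgroup H (mult_of R) \<Longrightarrow> H \<subseteq> Units R"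
  using subgroup.subset by (fastforce simp: field_Units)

lemma (in field) subgroup_mult_of_inv_closed:
  assumes H: "subgroup H (mult_of R)" and z: "z \<in> H"
  shows "inv z \<in> H"
  using subgroup.m_inv_closed[OF H z] subgroup.subset[OF H] z m_inv_mult_of[of z] by force

text \<open>For \<open>|H| = mq\<close>, the map \<open>z \<mapsto> z\<^sup>q\<close> sends \<open>H\<close> into the \<open>m\<close>-th roots of unity with fibres
  of size at most \<open>q\<close>.\<close>

lemma (in field) card_roots_of_unity_in_subgroup:
  assumes fin: "finite (carrier R)" and H: "subgroup H (mult_of R)"
    and m: "m > 0" "m dvd card H"
  shows "card {z \<in> H. z [^] m = \<one>} = m"
proof -
  interpret G: group "mult_of R" by (rule field_mult_group)
  have H_Units: "H \<subseteq> Units R" by (rule subgroup_mult_of_subset_Units[OF H])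
  have finH: "finite H" using H_Units fin finite_subset[of H "carrier R"] by (auto dest: Units_closed)
  obtain q where q: "card H = m * q" using m(2) by blast
  have "card H > 0" using finH subgroup.one_closed[OF H] card_gt_0_iff by fastforce
  then have q_pos: "q > 0" using q by simp
  let ?roots = "{z \<in> H. z [^] m = \<one>}"
  have "card ?roots \<le> card {z \<in> carrier R. z [^] m = \<one>}"
    using fin H_Units by (intro card_mono) (auto dest: Units_closed)
  also have "\<dots> \<le> m" using num_roots_le_deg[OF fin] m by simp
  finally have upper: "card ?roots \<le> m" .
  have image: "(\<lambda>z. z [^] q) ` H \<subseteq> ?roots"
  proof (intro image_subsetI CollectI conjI)
    fix z assume z: "z \<in> H"
    show "z [^] q \<in> H" using G.subgroup_nat_pow_closed[OF H z] by (simp add: nat_pow_mult_of)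
    have "(z [^] q) [^] m = z [^] card H"
      using z H_Units by (simp add: q nat_pow_pow Units_closed subsetD mult.commute)
    also have "\<dots> = \<one>" using G.subgroup_pow_card_eq_one[OF H z] by (simp add: nat_pow_mult_of)
    finally show "(z [^] q) [^] m = \<one>" .
  qed
  have "m * q \<le> card ((\<lambda>z. z [^] q) ` H) * q"
    unfolding q[symmetric]
  proof (rule card_le_card_image_mult[OF finH])
    fix x assume "x \<in> H"
    then have "card {y \<in> H. y [^] q = x [^] q} \<le> card {y \<in> Units R. y [^] q = x [^] q}"
      using H_Units fin by (intro card_mono) (auto intro: finite_subset[of _ "carrier R"])
    also have "\<dots> \<le> q" using card_power_fibre_le[OF fin _ q_pos] \<open>x \<in> H\<close> H_Units by blast
    finally show "card {y \<in> H. y [^] q = x [^] q} \<le> q" .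
  qed
  also have "\<dots> \<le> card ?roots * q"
    using image finH by (intro mult_le_mono1 card_mono) auto
  finally have "m \<le> card ?roots" using q_pos by simp
  with upper show ?thesis by simp
qed

lemma (in field) two_card_add_inv_image:
  assumes S: "finite S" "S \<subseteq> Units R" and inv_S: "\<And>z. z \<in> S \<Longrightarrow> inv z \<in> S"
  shows "2 * card ((\<lambda>z. z \<oplus> inv z) ` S) = card S + card {z \<in> S. inv z = z}"
proof (rule card_image_fibres_involution)
  fix z w assume "z \<in> S" "w \<in> S"
  then show "z \<oplus> inv z = w \<oplus> inv w \<longleftrightarrow> w = z \<or> w = inv z"
    using S(2) add_inv_eq_add_inv_iff by blast
qed (use S inv_S in auto)

lemma (in field) subgroup_power_map_periodic_iff:
  assumes H: "subgroup H (mult_of R)" "finite H" and z: "z \<in> H" and d: "d > 0"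
  shows "(\<exists>k\<ge>1. z [^] (d ^ k) = z) \<longleftrightarrow> z [^] coprime_part (card H) d = \<one>"
proof -
  interpret G: group "mult_of R" by (rule field_mult_group)
  have "card H > 0" using H z card_gt_0_iff by blast
  moreover have "z [^]\<^bsub>mult_of R\<^esub> card H = \<one>\<^bsub>mult_of R\<^esub>"
    by (rule G.subgroup_pow_card_eq_one[OF H(1) z])
  ultimately show ?thesis
    using G.power_map_periodic_iff[of z "card H" d] subgroup.mem_carrier[OF H(1) z] d
    by (simp add: nat_pow_mult_of)
qed

section \<open>The field with \<open>p\<^sup>2\<close> elements\<close>

lemma exists_irreducible_quadratic_mod:
  fixes p :: nat
  assumes "p > 1"
  shows "\<exists>a b. \<forall>t::int. (t * t - a * t - b) mod int p \<noteq> 0"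
proof -
  define F where "F = {0..<int p}"
  define g where "g = (\<lambda>(s, t). ((s + t) mod int p, (- (s * t)) mod int p))"
  text \<open>\<open>g\<close> sends \<open>(s, t)\<close> to the \<open>(a, b)\<close> with \<open>X\<^sup>2 - aX - b = (X - s)(X - t)\<close>.\<close>
  have "g (0, 1) = g (1, 0)" "(0::int, 1::int) \<noteq> (1, 0)" "(0, 1) \<in> F \<times> F" "(1, 0) \<in> F \<times> F"
    using assms by (auto simp: g_def F_def)
  then have "\<not> inj_on g (F \<times> F)" unfolding inj_on_def by blast
  then have "card (g ` (F \<times> F)) \<noteq> card (F \<times> F)"
    using eq_card_imp_inj_on[of "F \<times> F" g] by (auto simp: F_def)
  moreover have "g ` (F \<times> F) \<subseteq> F \<times> F" using assms by (auto simp: g_def F_def)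
  ultimately have "F \<times> F - g ` (F \<times> F) \<noteq> {}" by auto
  then obtain a b where ab: "(a, b) \<in> F \<times> F" "(a, b) \<notin> g ` (F \<times> F)" by auto
  have "(t * t - a * t - b) mod int p \<noteq> 0" for t
  proof
    assume root: "(t * t - a * t - b) mod int p = 0"
    have "g ((a - t) mod int p, t mod int p) = ((a - t + t) mod int p, (- ((a - t) * t)) mod int p)"
      by (simp add: g_def mod_add_eq mod_minus_cong[OF mod_mult_eq])
    also have "- ((a - t) * t) = (t * t - a * t - b) + b" by (simp add: algebra_simps)
    also have "((t * t - a * t - b) + b) mod int p = b mod int p"
      using root mod_add_left_eq[of "t * t - a * t - b" "int p" b] by simp
    finally have "g ((a - t) mod int p, t mod int p) = (a, b)" using ab(1) by (simp add: F_def)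
    moreover have "((a - t) mod int p, t mod int p) \<in> F \<times> F" using assms by (simp add: F_def)
    ultimately have "(a, b) \<in> g ` (F \<times> F)" by (metis rev_image_eqI)
    with ab(2) show False by contradiction
  qed
  then show ?thesis by blast
qed

text \<open>\<open>K\<close> is \<open>\<int>/p[\<theta>]\<close> with \<open>\<theta>\<^sup>2 = a\<theta> + b\<close>: the pair \<open>(u, v)\<close> stands for \<open>u + v\<theta>\<close>,
  with \<open>u, v\<close> reduced modulo \<open>p\<close>; \<open>qconj\<close> is the conjugation \<open>\<theta> \<mapsto> a - \<theta>\<close>.\<close>

locale quadratic_extension =
  fixes p :: nat and a b :: int
  assumes prime_p: "prime p"
    and irreducible: "\<And>t::int. (t * t - a * t - b) mod int p \<noteq> 0"
begin

abbreviation Fp :: "int set" where "Fp \<equiv> A1_Fp p"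

definition red :: "int \<times> int \<Rightarrow> int \<times> int" where
  "red x = (fst x mod int p, snd x mod int p)"

definition qmult :: "int \<times> int \<Rightarrow> int \<times> int \<Rightarrow> int \<times> int" where
  "qmult x y =
    (fst x * fst y + b * snd x * snd y, fst x * snd y + snd x * fst y + a * snd x * snd y)"

definition qadd :: "int \<times> int \<Rightarrow> int \<times> int \<Rightarrow> int \<times> int" where
  "qadd x y = (fst x + fst y, snd x + snd y)"

definition qconj :: "int \<times> int \<Rightarrow> int \<times> int" where
  "qconj x = (fst x + a * snd x, - snd x)"

definition K :: "(int \<times> int) ring" where
  "K = \<lparr>carrier = Fp \<times> Fp, mult = (\<lambda>x y. red (qmult x y)), one = (1, 0),
        zero = (0, 0), add = (\<lambda>x y. red (qadd x y))\<rparr>"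

lemma p_gt_1: "int p > 1"
  using prime_p prime_gt_1_nat by auto

lemma mod_cong_self: "[x mod m = x] (mod m)" for x m :: int
  by (simp add: cong_def)

lemma red_red [simp]: "red (red x) = red x"
  by (simp add: red_def)

lemma red_qmult_left [simp]: "red (qmult (red x) y) = red (qmult x y)"
  unfolding red_def qmult_def cong_def[symmetric] fst_conv snd_conv prod.inject
  by (intro conjI cong_add cong_mult cong_refl mod_cong_self)

lemma red_qmult_right [simp]: "red (qmult x (red y)) = red (qmult x y)"
  unfolding red_def qmult_def cong_def[symmetric] fst_conv snd_conv prod.inject
  by (intro conjI cong_add cong_mult cong_refl mod_cong_self)

lemma red_qadd_left [simp]: "red (qadd (red x) y) = red (qadd x y)"
  and red_qadd_right [simp]: "red (qadd x (red y)) = red (qadd x y)"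
  by (simp_all add: red_def qadd_def mod_simps)

lemma red_qconj [simp]: "red (qconj (red x)) = red (qconj x)"
  unfolding red_def qconj_def cong_def[symmetric] fst_conv snd_conv prod.inject
  by (intro conjI cong_add cong_mult cong_refl mod_cong_self cong_minus_minus_iff[THEN iffD2])

lemma one_mod_p [simp]: "1 mod int p = 1"
  using p_gt_1 by simp

lemma mod_p_eq_self_iff: "u mod int p = u \<longleftrightarrow> u \<in> Fp"
proof
  assume "u mod int p = u"
  then show "u \<in> Fp"
    using pos_mod_sign[of "int p" u] pos_mod_bound[of "int p" u] p_gt_1 by (simp add: A1_Fp_def)
qed (simp add: A1_Fp_def)

lemma carrier_K_iff: "x \<in> carrier K \<longleftrightarrow> red x = x"
  by (cases x) (simp add: K_def red_def mod_p_eq_self_iff)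

lemma red_in_carrier [simp]: "red x \<in> carrier K"
  by (simp add: carrier_K_iff)

lemma K_ops [simp]:
  "x \<otimes>\<^bsub>K\<^esub> y = red (qmult x y)" "x \<oplus>\<^bsub>K\<^esub> y = red (qadd x y)"
  "\<one>\<^bsub>K\<^esub> = (1, 0)" "\<zero>\<^bsub>K\<^esub> = (0, 0)"
  by (simp_all add: K_def)

lemma qmult_assoc: "qmult (qmult x y) z = qmult x (qmult y z)"
  and qmult_comm: "qmult x y = qmult y x"
  and qadd_assoc: "qadd (qadd x y) z = qadd x (qadd y z)"
  and qadd_comm: "qadd x y = qadd y x"
  and qmult_qadd_distrib: "qmult (qadd x y) z = qadd (qmult x z) (qmult y z)"
  by (simp_all add: qmult_def qadd_def algebra_simps)

lemma cring_K: "cring K"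
proof (rule cringI)
  show "abelian_group K"
  proof (rule abelian_groupI)
    fix x y z assume "x \<in> carrier K" "y \<in> carrier K" "z \<in> carrier K"
    then show "x \<oplus>\<^bsub>K\<^esub> y \<oplus>\<^bsub>K\<^esub> z = x \<oplus>\<^bsub>K\<^esub> (y \<oplus>\<^bsub>K\<^esub> z)"
      by (metis K_ops(2) qadd_assoc red_qadd_left red_qadd_right)
  next
    fix x y show "x \<oplus>\<^bsub>K\<^esub> y = y \<oplus>\<^bsub>K\<^esub> x" by (simp add: qadd_comm)
  next
    fix x assume "x \<in> carrier K"
    then show "\<zero>\<^bsub>K\<^esub> \<oplus>\<^bsub>K\<^esub> x = x" by (simp add: carrier_K_iff qadd_def)
  next
    fix x assume "x \<in> carrier K"
    show "\<exists>y\<in>carrier K. y \<oplus>\<^bsub>K\<^esub> x = \<zero>\<^bsub>K\<^esub>"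
      by (rule bexI[OF _ red_in_carrier[of "(- fst x, - snd x)"]])
        (simp add: qadd_def red_def mod_simps)
  qed (auto simp: carrier_K_iff red_def)
  show "comm_monoid K"
  proof (rule comm_monoidI)
    fix x y z assume "x \<in> carrier K" "y \<in> carrier K" "z \<in> carrier K"
    then show "x \<otimes>\<^bsub>K\<^esub> y \<otimes>\<^bsub>K\<^esub> z = x \<otimes>\<^bsub>K\<^esub> (y \<otimes>\<^bsub>K\<^esub> z)"
      by (metis K_ops(1) qmult_assoc red_qmult_left red_qmult_right)
  next
    fix x y show "x \<otimes>\<^bsub>K\<^esub> y = y \<otimes>\<^bsub>K\<^esub> x" by (simp add: qmult_comm)
  next
    fix x assume "x \<in> carrier K"
    then show "\<one>\<^bsub>K\<^esub> \<otimes>\<^bsub>K\<^esub> x = x" by (simp add: carrier_K_iff qmult_def)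
  qed (auto simp: carrier_K_iff red_def)
  fix x y z assume "x \<in> carrier K" "y \<in> carrier K" "z \<in> carrier K"
  then show "(x \<oplus>\<^bsub>K\<^esub> y) \<otimes>\<^bsub>K\<^esub> z = x \<otimes>\<^bsub>K\<^esub> z \<oplus>\<^bsub>K\<^esub> y \<otimes>\<^bsub>K\<^esub> z"
    by (metis K_ops(1,2) qmult_qadd_distrib red_qmult_left red_qadd_left red_qadd_right)
qed

definition qnorm :: "int \<times> int \<Rightarrow> int" where
  "qnorm x = fst x * fst x + a * fst x * snd x - b * snd x * snd x"

lemma qmult_qconj: "qmult x (qconj x) = (qnorm x, 0)"
  by (simp add: qconj_def qmult_def qnorm_def algebra_simps)

lemma qnorm_not_dvd:
  assumes x: "x \<in> carrier K" "x \<noteq> \<zero>\<^bsub>K\<^esub>"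
  shows "\<not> int p dvd qnorm x"
proof
  obtain u v where uv: "x = (u, v)" by (cases x)
  have prime: "prime (int p)" using prime_p by simp
  assume dvd: "int p dvd qnorm x"
  have u: "u \<in> Fp" and v: "v \<in> Fp" using x(1) by (auto simp: K_def uv)
  show False
  proof (cases "v = 0")
    case True
    then have "int p dvd u * u" "u \<noteq> 0" using dvd x uv by (auto simp: qnorm_def)
    then have "int p dvd u" using prime prime_dvd_mult_iff by blast
    then show False using zdvd_imp_le[of "int p" u] u \<open>u \<noteq> 0\<close> by (simp add: A1_Fp_def)
  next
    case False
    then have "\<not> int p dvd v" using zdvd_imp_le[of "int p" v] v by (auto simp: A1_Fp_def)
    then have "coprime v (int p)" using prime prime_imp_coprime coprime_commute by blast
    then obtain w where w: "[v * w = 1] (mod int p)" using cong_solve_coprime_int by blast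
    define t where "t = - u * w"
    text \<open>Dividing the norm form by \<open>v\<^sup>2\<close> gives a root \<open>t = -u/v\<close> of \<open>t\<^sup>2 - at - b\<close>.\<close>
    have "[t * t - a * t - b = u * u * w * w + a * u * w * 1 - b * 1 * 1] (mod int p)"
      by (simp add: t_def algebra_simps)
    also have "[u * u * w * w + a * u * w * 1 - b * 1 * 1
        = u * u * w * w + a * u * w * (v * w) - b * (v * w) * (v * w)] (mod int p)"
      by (intro cong_add cong_diff cong_mult cong_refl) (use w in \<open>simp_all add: cong_sym\<close>)
    also have "u * u * w * w + a * u * w * (v * w) - b * (v * w) * (v * w) = w * w * qnorm x"
      by (simp add: uv qnorm_def algebra_simps)
    finally have "int p dvd t * t - a * t - b"
      using dvd by (metis cong_dvd_iff dvd_mult)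
    then show False using irreducible[of t] by simp
  qed
qed

lemma field_K: "field K"
proof (rule cring.cring_fieldI2[OF cring_K])
  fix x assume x: "x \<in> carrier K" "x \<noteq> \<zero>\<^bsub>K\<^esub>"
  have "coprime (qnorm x) (int p)"
    using qnorm_not_dvd[OF x] prime_p prime_imp_coprime[of "int p"] coprime_commute by auto
  then obtain c where c: "[qnorm x * c = 1] (mod int p)" using cong_solve_coprime_int by blast
  show "\<exists>y\<in>carrier K. x \<otimes>\<^bsub>K\<^esub> y = \<one>\<^bsub>K\<^esub>"
  proof (rule bexI[OF _ red_in_carrier])
    have "x \<otimes>\<^bsub>K\<^esub> red (qmult (qconj x) (c, 0)) = red (qmult (qmult x (qconj x)) (c, 0))"
      by (simp add: qmult_assoc)
    also have "\<dots> = \<one>\<^bsub>K\<^esub>"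
      using c unfolding qmult_qconj by (simp add: qmult_def red_def cong_def)
    finally show "x \<otimes>\<^bsub>K\<^esub> red (qmult (qconj x) (c, 0)) = \<one>\<^bsub>K\<^esub>" .
  qed
qed simp

end

sublocale quadratic_extension \<subseteq> K: field K
  by (rule field_K)

context quadratic_extension
begin

declare K_ops [simp del]

definition emb :: "int \<Rightarrow> int \<times> int" where
  "emb n = red (n, 0)"

lemma emb_ring_hom: "emb \<in> ring_hom \<Z> K"
  by (rule ring_hom_memI) (simp_all add: emb_def K_ops, simp_all add: qmult_def qadd_def red_def)

end

sublocale quadratic_extension \<subseteq> emb: ring_hom_cring \<Z> K emb
  by (intro ring_hom_cringI ring_hom_ringI2 int_is_cring cring.axioms K.is_cring emb_ring_hom)

context quadratic_extension
begin

lemma emb_0 [simp]: "emb 0 = \<zero>\<^bsub>K\<^esub>"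
  and emb_1 [simp]: "emb 1 = \<one>\<^bsub>K\<^esub>"
  and emb_minus_1: "emb (- 1) = \<ominus>\<^bsub>K\<^esub> \<one>\<^bsub>K\<^esub>"
  using emb.hom_a_inv[of 1] by (simp_all add: emb_def red_def K_ops int_a_inv_eq)

lemma emb_eq_iff: "emb x = emb y \<longleftrightarrow> x mod int p = y mod int p"
  by (simp add: emb_def red_def)

lemma inj_on_emb: "inj_on emb Fp"
  by (intro inj_onI) (simp add: emb_eq_iff mod_p_eq_self_iff[symmetric])

lemma snd_emb [simp]: "snd (emb x) = 0"
  by (simp add: emb_def red_def)

lemma emb_image: "emb ` Fp = {z \<in> carrier K. snd z = 0}"
proof (intro equalityI subsetI)
  fix z assume z: "z \<in> {z \<in> carrier K. snd z = 0}"
  then have "z = emb (fst z)" "fst z \<in> Fp"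
    using carrier_K_iff[of z] by (cases z; auto simp: emb_def red_def mod_p_eq_self_iff[symmetric])+
  then show "z \<in> emb ` Fp" by blast
qed auto

lemma emb_in_image: "emb x \<in> emb ` Fp"
  by (rule image_eqI[of _ _ "x mod int p"]) (simp_all add: emb_eq_iff mod_p_eq_self_iff[symmetric])

definition conj :: "int \<times> int \<Rightarrow> int \<times> int" where
  "conj z = red (qconj z)"

lemma conj_closed [simp]: "conj z \<in> carrier K"
  by (simp add: conj_def)

lemma conj_mult: "conj (z \<otimes>\<^bsub>K\<^esub> w) = conj z \<otimes>\<^bsub>K\<^esub> conj w"
proof -
  have "qconj (qmult z w) = qmult (qconj z) (qconj w)"
    by (simp add: qconj_def qmult_def algebra_simps)
  then show ?thesis by (simp add: K_ops conj_def)
qed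

lemma conj_conj: "z \<in> carrier K \<Longrightarrow> conj (conj z) = z"
  using red_qconj[of "qconj z"] by (simp add: conj_def carrier_K_iff, simp add: qconj_def)

lemma conj_emb: "conj (emb x) = emb x"
  by (simp add: conj_def emb_def, simp add: qconj_def)

lemma mult_conj: "z \<otimes>\<^bsub>K\<^esub> conj z = emb (qnorm z)"
  by (simp add: K_ops conj_def emb_def qmult_qconj)

lemma add_conj: "z \<oplus>\<^bsub>K\<^esub> conj z = emb (2 * fst z + a * snd z)"
  by (simp add: K_ops conj_def emb_def, simp add: qconj_def qadd_def)

definition Fp_star :: "(int \<times> int) set" where
  "Fp_star = {z \<in> carrier K. snd z = 0} - {\<zero>\<^bsub>K\<^esub>}"

definition U :: "(int \<times> int) set" where
  "U = {z \<in> carrier K. z \<otimes>\<^bsub>K\<^esub> conj z = \<one>\<^bsub>K\<^esub>}"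

lemma Fp_star_eq_image: "Fp_star = emb ` (Fp - {0})"
proof -
  have "emb ` (Fp - {0}) = emb ` Fp - emb ` {0}"
    using p_gt_1 inj_on_emb by (intro inj_on_image_set_diff) (auto simp: A1_Fp_def)
  then show ?thesis by (simp add: Fp_star_def emb_image)
qed

lemma card_Fp_star: "card Fp_star = p - 1"
proof -
  have "card Fp_star = card (Fp - {0})"
    unfolding Fp_star_eq_image using inj_on_emb by (intro card_image) (auto intro: inj_on_subset)
  also have "\<dots> = p - 1" using p_gt_1 by (simp add: A1_Fp_def)
  finally show ?thesis .
qed

lemma conj_Fp_star: "z \<in> Fp_star \<Longrightarrow> conj z = z"
  by (auto simp: Fp_star_eq_image conj_emb)

lemma subgroup_Fp_star: "subgroup Fp_star (mult_of K)"
proof (rule group.subgroupI[OF K.field_mult_group])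
  show "Fp_star \<subseteq> carrier (mult_of K)" by (auto simp: Fp_star_def)
  have "1 \<in> Fp - {0}" using p_gt_1 by (simp add: A1_Fp_def)
  then show "Fp_star \<noteq> {}" by (auto simp: Fp_star_eq_image)
next
  fix z w assume z: "z \<in> Fp_star" and w: "w \<in> Fp_star"
  then have "snd (z \<otimes>\<^bsub>K\<^esub> w) = 0" by (auto simp: Fp_star_eq_image simp flip: emb.hom_mult)
  then show "z \<otimes>\<^bsub>mult_of K\<^esub> w \<in> Fp_star" using z w by (auto simp: Fp_star_def K.integral_iff)
next
  fix z assume z: "z \<in> Fp_star"
  then obtain x where x: "z = emb x" "x \<in> Fp" "x \<noteq> 0" by (auto simp: Fp_star_eq_image)
  then have "\<not> int p dvd x" using zdvd_imp_le[of "int p" x] by (auto simp: A1_Fp_def)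
  then have "coprime x (int p)"
    using prime_p prime_imp_coprime[of "int p" x] coprime_commute by auto
  then obtain c where c: "[x * c = 1] (mod int p)" using cong_solve_coprime_int by blast
  have "z \<otimes>\<^bsub>K\<^esub> emb c = emb (x * c)" using emb.hom_mult[of x c] by (simp add: x)
  also have "\<dots> = \<one>\<^bsub>K\<^esub>" using c emb_eq_iff[of "x * c" 1] by (simp add: cong_def)
  finally have zc: "z \<otimes>\<^bsub>K\<^esub> emb c = \<one>\<^bsub>K\<^esub>" .
  then have "inv\<^bsub>K\<^esub> z = emb c" using z by (intro K.comm_inv_char) (auto simp: Fp_star_def)
  moreover have "emb c \<in> Fp_star"
    using zc z emb_image by (auto simp: Fp_star_def)
  ultimately show "inv\<^bsub>mult_of K\<^esub> z \<in> Fp_star"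
    using z by (simp add: Fp_star_def K.m_inv_mult_of)
qed

lemma inv_U: "z \<in> U \<Longrightarrow> inv\<^bsub>K\<^esub> z = conj z"
  by (rule K.comm_inv_char) (auto simp: U_def)

lemma subgroup_U: "subgroup U (mult_of K)"
proof (rule group.subgroupI[OF K.field_mult_group])
  show "U \<subseteq> carrier (mult_of K)" by (auto simp: U_def)
  have "\<one>\<^bsub>K\<^esub> \<in> U" using conj_emb[of 1] by (simp add: U_def)
  then show "U \<noteq> {}" by blast
next
  fix z w assume "z \<in> U" "w \<in> U"
  then show "z \<otimes>\<^bsub>mult_of K\<^esub> w \<in> U"
    by (auto simp: U_def conj_mult K.m_ac)
next
  fix z assume z: "z \<in> U"
  then have "z \<noteq> \<zero>\<^bsub>K\<^esub>" by (auto simp: U_def)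
  moreover have "conj z \<in> U" using z conj_conj[of z] by (auto simp: U_def K.m_comm)
  ultimately show "inv\<^bsub>mult_of K\<^esub> z \<in> U"
    using z inv_U[OF z] K.m_inv_mult_of[of z] by (simp add: U_def)
qed

lemma Fp_star_Int_U: "Fp_star \<inter> U = {\<one>\<^bsub>K\<^esub>, \<ominus>\<^bsub>K\<^esub> \<one>\<^bsub>K\<^esub>}"
proof -
  have "\<one>\<^bsub>K\<^esub> \<in> Fp_star" "\<ominus>\<^bsub>K\<^esub> \<one>\<^bsub>K\<^esub> \<in> Fp_star"
    using emb_in_image[of 1] emb_in_image[of "- 1"]
    by (auto simp: Fp_star_def emb_minus_1 K.add.inv_eq_1_iff simp flip: emb_image)
  moreover have "z \<in> U \<longleftrightarrow> z = \<one>\<^bsub>K\<^esub> \<or> z = \<ominus>\<^bsub>K\<^esub> \<one>\<^bsub>K\<^esub>" if "z \<in> Fp_star" for z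
    using that conj_Fp_star[OF that] K.square_eq_one[of z]
    by (auto simp: U_def Fp_star_def K.l_minus K.r_minus)
  ultimately show ?thesis by blast
qed

lemma finite_carrier_K [simp]: "finite (carrier K)"
  by (simp add: K_def A1_Fp_def)

lemma card_carrier_K: "card (carrier K) = p * p"
  by (simp add: K_def A1_Fp_def card_cartesian_product)

lemma finite_Fp_star: "finite Fp_star"
  and finite_U: "finite U"
  by (simp_all add: Fp_star_def U_def)

lemma norm_mult:
  "z \<in> carrier K \<Longrightarrow> w \<in> carrier K \<Longrightarrow>
   (z \<otimes>\<^bsub>K\<^esub> w) \<otimes>\<^bsub>K\<^esub> conj (z \<otimes>\<^bsub>K\<^esub> w) = (z \<otimes>\<^bsub>K\<^esub> conj z) \<otimes>\<^bsub>K\<^esub> (w \<otimes>\<^bsub>K\<^esub> conj w)"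
  by (simp add: conj_mult K.m_ac)

lemma norm_in_Fp_star:
  assumes z: "z \<in> carrier K" "z \<noteq> \<zero>\<^bsub>K\<^esub>"
  shows "z \<otimes>\<^bsub>K\<^esub> conj z \<in> Fp_star"
proof -
  have "conj z \<noteq> \<zero>\<^bsub>K\<^esub>" using z conj_conj[of z] conj_emb[of 0] by auto
  then have "z \<otimes>\<^bsub>K\<^esub> conj z \<noteq> \<zero>\<^bsub>K\<^esub>" using z by (simp add: K.integral_iff)
  then show ?thesis using z by (simp add: Fp_star_def mult_conj)
qed

lemma card_norm_fibre_le:
  assumes x: "x \<in> carrier K" "x \<noteq> \<zero>\<^bsub>K\<^esub>"
  shows "card {y \<in> carrier K - {\<zero>\<^bsub>K\<^esub>}. y \<otimes>\<^bsub>K\<^esub> conj y = x \<otimes>\<^bsub>K\<^esub> conj x} \<le> card U"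
proof (rule card_inj_on_le[where f = "\<lambda>y. y \<otimes>\<^bsub>K\<^esub> inv\<^bsub>K\<^esub> x"])
  have ix: "inv\<^bsub>K\<^esub> x \<in> carrier K" "inv\<^bsub>K\<^esub> x \<noteq> \<zero>\<^bsub>K\<^esub>" "x \<otimes>\<^bsub>K\<^esub> inv\<^bsub>K\<^esub> x = \<one>\<^bsub>K\<^esub>"
    using x K.field_Units K.Units_inv_Units[of x] by auto
  show "inj_on (\<lambda>y. y \<otimes>\<^bsub>K\<^esub> inv\<^bsub>K\<^esub> x) {y \<in> carrier K - {\<zero>\<^bsub>K\<^esub>}. y \<otimes>\<^bsub>K\<^esub> conj y = x \<otimes>\<^bsub>K\<^esub> conj x}"
    using ix by (intro inj_onI) (auto simp: K.m_rcancel)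
  show "(\<lambda>y. y \<otimes>\<^bsub>K\<^esub> inv\<^bsub>K\<^esub> x) ` {y \<in> carrier K - {\<zero>\<^bsub>K\<^esub>}. y \<otimes>\<^bsub>K\<^esub> conj y = x \<otimes>\<^bsub>K\<^esub> conj x} \<subseteq> U"
  proof (intro image_subsetI)
    fix y assume y: "y \<in> {y \<in> carrier K - {\<zero>\<^bsub>K\<^esub>}. y \<otimes>\<^bsub>K\<^esub> conj y = x \<otimes>\<^bsub>K\<^esub> conj x}"
    then have "(y \<otimes>\<^bsub>K\<^esub> inv\<^bsub>K\<^esub> x) \<otimes>\<^bsub>K\<^esub> conj (y \<otimes>\<^bsub>K\<^esub> inv\<^bsub>K\<^esub> x)
        = (x \<otimes>\<^bsub>K\<^esub> conj x) \<otimes>\<^bsub>K\<^esub> (inv\<^bsub>K\<^esub> x \<otimes>\<^bsub>K\<^esub> conj (inv\<^bsub>K\<^esub> x))"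
      using ix by (simp add: norm_mult)
    also have "\<dots> = (x \<otimes>\<^bsub>K\<^esub> inv\<^bsub>K\<^esub> x) \<otimes>\<^bsub>K\<^esub> conj (x \<otimes>\<^bsub>K\<^esub> inv\<^bsub>K\<^esub> x)"
      using x ix by (intro norm_mult[symmetric]) auto
    also have "\<dots> = \<one>\<^bsub>K\<^esub>" using ix(3) conj_emb[of 1] by simp
    finally show "y \<otimes>\<^bsub>K\<^esub> inv\<^bsub>K\<^esub> x \<in> U" using y ix by (simp add: U_def)
  qed
qed (simp add: U_def)

text \<open>The norm map \<open>K\<^sup>* \<rightarrow> F\<^sub>p\<^sup>*\<close> has fibres of size at most \<open>|U|\<close>, so \<open>p\<^sup>2 - 1 \<le> (p - 1)|U|\<close>.\<close>

lemma card_U_ge: "p + 1 \<le> card U"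
proof -
  let ?X = "carrier K - {\<zero>\<^bsub>K\<^esub>}" and ?N = "\<lambda>z. z \<otimes>\<^bsub>K\<^esub> conj z"
  have "(p - 1) * (p + 1) = card ?X"
    using card_carrier_K by (simp add: card_Diff_singleton algebra_simps)
  also have "\<dots> \<le> card (?N ` ?X) * card U"
    by (rule card_le_card_image_mult) (use card_norm_fibre_le in auto)
  also have "\<dots> \<le> (p - 1) * card U"
    unfolding card_Fp_star[symmetric] using norm_in_Fp_star finite_Fp_star
    by (intro mult_le_mono1 card_mono image_subsetI) auto
  finally have "(p - 1) * (p + 1) \<le> (p - 1) * card U" .
  then show ?thesis using p_gt_1 by (subst (asm) mult_le_cancel1) simp
qed

section \<open>The map \<open>z \<mapsto> z + 1/z\<close>\<close>

definition phi :: "int \<times> int \<Rightarrow> int \<times> int" where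
  "phi z = z \<oplus>\<^bsub>K\<^esub> inv\<^bsub>K\<^esub> z"

lemma Fp_star_Un_U_subset_Units: "Fp_star \<union> U \<subseteq> Units K"
  using K.subgroup_mult_of_subset_Units subgroup_Fp_star subgroup_U by blast

lemma inv_in_Fp_star_Un_U: "z \<in> Fp_star \<union> U \<Longrightarrow> inv\<^bsub>K\<^esub> z \<in> Fp_star \<union> U"
  using K.subgroup_mult_of_inv_closed subgroup_Fp_star subgroup_U by blast

lemma phi_in_prime_field:
  assumes z: "z \<in> Fp_star \<union> U"
  shows "phi z \<in> emb ` Fp"
proof (cases "z \<in> U")
  case True
  then show ?thesis by (simp add: phi_def inv_U add_conj emb_in_image)
next
  case False
  then have "z \<in> Fp_star" "inv\<^bsub>K\<^esub> z \<in> Fp_star"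
    using z K.subgroup_mult_of_inv_closed[OF subgroup_Fp_star] by auto
  then obtain x y where "z = emb x" "inv\<^bsub>K\<^esub> z = emb y" by (auto simp: Fp_star_eq_image)
  then have "phi z = emb (x + y)" using emb.hom_add[of x y] by (simp add: phi_def)
  then show ?thesis by (simp add: emb_in_image)
qed

lemma two_card_phi_image: "2 * card (phi ` (Fp_star \<union> U)) = p - 1 + card U"
proof -
  have "2 * card (phi ` (Fp_star \<union> U))
      = card (Fp_star \<union> U) + card {z \<in> Fp_star \<union> U. inv\<^bsub>K\<^esub> z = z}"
    unfolding phi_def using finite_Fp_star finite_U Fp_star_Un_U_subset_Units inv_in_Fp_star_Un_U
    by (intro K.two_card_add_inv_image) auto
  also have "{z \<in> Fp_star \<union> U. inv\<^bsub>K\<^esub> z = z} = Fp_star \<inter> U"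
    using Fp_star_Un_U_subset_Units Fp_star_Int_U K.inv_eq_self_iff by auto
  also have "card (Fp_star \<union> U) + card (Fp_star \<inter> U) = card Fp_star + card U"
    using card_Un_Int[OF finite_Fp_star finite_U] by simp
  finally show ?thesis by (simp add: card_Fp_star)
qed

lemma card_U: "card U = p + 1"
proof -
  have "card (phi ` (Fp_star \<union> U)) \<le> card (emb ` Fp)"
    using phi_in_prime_field by (intro card_mono) (auto simp: A1_Fp_def)
  also have "\<dots> = p" using inj_on_emb by (simp add: card_image A1_Fp_def)
  finally show ?thesis using two_card_phi_image card_U_ge by linarith
qed

lemma phi_image: "phi ` (Fp_star \<union> U) = emb ` Fp"
proof (rule card_subset_eq)
  show "phi ` (Fp_star \<union> U) \<subseteq> emb ` Fp" using phi_in_prime_field by auto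
  show "card (phi ` (Fp_star \<union> U)) = card (emb ` Fp)"
    using two_card_phi_image card_U p_gt_1 inj_on_emb by (simp add: card_image A1_Fp_def)
qed (simp add: A1_Fp_def)

section \<open>Periodic points of \<open>T\<^sub>d\<close>\<close>

lemma cheb_Fp_in_Fp: "x \<in> Fp \<Longrightarrow> (cheb_Fp p d ^^ k) x \<in> Fp"
  using p_gt_1 by (induction k) (auto simp: A1_Fp_def cheb_Fp_def)

lemma emb_cheb_Fp_iterate:
  assumes z: "z \<in> Units K" and x: "emb x = phi z"
  shows "emb ((cheb_Fp p d ^^ k) x) = phi (z [^]\<^bsub>K\<^esub> (d ^ k))"
proof (induction k)
  case (Suc k)
  let ?w = "z [^]\<^bsub>K\<^esub> (d ^ k)"
  have w: "?w \<in> Units K" using z by (rule K.Units_pow_closed)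
  have "emb ((cheb_Fp p d ^^ Suc k) x) = emb (poly (cheb d) ((cheb_Fp p d ^^ k) x))"
    by (simp add: cheb_Fp_def emb_eq_iff)
  also have "\<dots> = ?w [^]\<^bsub>K\<^esub> d \<oplus>\<^bsub>K\<^esub> inv\<^bsub>K\<^esub> ?w [^]\<^bsub>K\<^esub> d"
    using K.ring_hom_poly_cheb[OF emb_ring_hom w] Suc by (simp add: phi_def)
  also have "\<dots> = phi (z [^]\<^bsub>K\<^esub> (d ^ Suc k))"
    using w z by (simp add: phi_def K.Units_inv_pow K.nat_pow_pow mult.commute K.Units_closed)
  finally show ?case .
qed (use x z in \<open>simp add: K.Units_closed\<close>)

lemma Per_cheb_Fp_iff:
  assumes z: "z \<in> Fp_star \<union> U" and x: "x \<in> Fp" "emb x = phi z"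
  shows "x \<in> Per (cheb_Fp p d) Fp \<longleftrightarrow> (\<exists>k\<ge>1. z [^]\<^bsub>K\<^esub> (d ^ k) = z)"
proof -
  have zU: "z \<in> Units K" using z Fp_star_Un_U_subset_Units by blast
  note iterate = emb_cheb_Fp_iterate[OF zU x(2), where d = d]
  show ?thesis
  proof
    assume "x \<in> Per (cheb_Fp p d) Fp"
    then obtain n where n: "n \<ge> 1" "(cheb_Fp p d ^^ n) x = x" by (auto simp: Per_def)
    let ?w = "z [^]\<^bsub>K\<^esub> (d ^ n)"
    have w: "?w \<in> Units K" using zU by (rule K.Units_pow_closed)
    have "phi ?w = phi z" using iterate[of n] n x by simp
    then have "?w = z \<or> ?w = inv\<^bsub>K\<^esub> z"
      using K.add_inv_eq_add_inv_iff[OF zU w] by (simp add: phi_def eq_commute)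
    then show "\<exists>k\<ge>1. z [^]\<^bsub>K\<^esub> (d ^ k) = z"
    proof
      assume "?w = inv\<^bsub>K\<^esub> z"
      text \<open>then \<open>z\<close> returns after \<open>2n\<close> steps, as the power map commutes with inversion\<close>
      have "z [^]\<^bsub>K\<^esub> (d ^ (n + n)) = ?w [^]\<^bsub>K\<^esub> (d ^ n)"
        using zU by (simp add: power_add K.nat_pow_pow K.Units_closed)
      also have "\<dots> = inv\<^bsub>K\<^esub> ?w" using zU \<open>?w = inv\<^bsub>K\<^esub> z\<close> by (simp add: K.Units_inv_pow)
      also have "\<dots> = z" using zU \<open>?w = inv\<^bsub>K\<^esub> z\<close> by simp
      finally show ?thesis using n by (intro exI[of _ "n + n"]) simp
    qed (use n in blast)
  next
    assume "\<exists>k\<ge>1. z [^]\<^bsub>K\<^esub> (d ^ k) = z"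
    then obtain k where k: "k \<ge> 1" "z [^]\<^bsub>K\<^esub> (d ^ k) = z" by blast
    then have "emb ((cheb_Fp p d ^^ k) x) = emb x" using iterate[of k] x by simp
    then have "(cheb_Fp p d ^^ k) x = x" using inj_on_emb cheb_Fp_in_Fp x(1) by (auto dest: inj_onD)
    then show "x \<in> Per (cheb_Fp p d) Fp" using k x(1) by (auto simp: Per_def)
  qed
qed

lemma emb_image_Per_cheb_Fp:
  "emb ` Per (cheb_Fp p d) Fp = phi ` {z \<in> Fp_star \<union> U. \<exists>k\<ge>1. z [^]\<^bsub>K\<^esub> (d ^ k) = z}"
proof (intro equalityI subsetI)
  fix y assume "y \<in> emb ` Per (cheb_Fp p d) Fp"
  then obtain x where x: "y = emb x" "x \<in> Per (cheb_Fp p d) Fp" by (rule imageE)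
  then have "x \<in> Fp" by (simp add: Per_def)
  then have "emb x \<in> phi ` (Fp_star \<union> U)" by (simp add: phi_image)
  then obtain z where z: "emb x = phi z" "z \<in> Fp_star \<union> U" by (rule imageE)
  have "z \<in> {z \<in> Fp_star \<union> U. \<exists>k\<ge>1. z [^]\<^bsub>K\<^esub> (d ^ k) = z}"
    using Per_cheb_Fp_iff[OF z(2) \<open>x \<in> Fp\<close> z(1)] x(2) z(2) by simp
  with x(1) z(1) show "y \<in> phi ` {z \<in> Fp_star \<union> U. \<exists>k\<ge>1. z [^]\<^bsub>K\<^esub> (d ^ k) = z}"
    by (simp only: image_eqI)
next
  fix y assume "y \<in> phi ` {z \<in> Fp_star \<union> U. \<exists>k\<ge>1. z [^]\<^bsub>K\<^esub> (d ^ k) = z}"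
  then obtain z where z: "y = phi z" "z \<in> {z \<in> Fp_star \<union> U. \<exists>k\<ge>1. z [^]\<^bsub>K\<^esub> (d ^ k) = z}"
    by (rule imageE)
  then have "phi z \<in> emb ` Fp" using phi_in_prime_field by simp
  then obtain x where x: "phi z = emb x" "x \<in> Fp" by (rule imageE)
  then have "x \<in> Per (cheb_Fp p d) Fp" using Per_cheb_Fp_iff[of z x d] z(2) by simp
  with x(1) z(1) show "y \<in> emb ` Per (cheb_Fp p d) Fp" by (simp only: image_eqI)
qed

lemma minus_one_pow_coprime_parts:
  "(\<ominus>\<^bsub>K\<^esub> \<one>\<^bsub>K\<^esub>) [^]\<^bsub>K\<^esub> coprime_part (p - 1) d = \<one>\<^bsub>K\<^esub>
   \<longleftrightarrow> (\<ominus>\<^bsub>K\<^esub> \<one>\<^bsub>K\<^esub>) [^]\<^bsub>K\<^esub> coprime_part (p + 1) d = \<one>\<^bsub>K\<^esub>"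
proof (cases "p = 2")
  case True
  then have "(- 1) mod int p = 1 mod int p" by simp
  then have "\<ominus>\<^bsub>K\<^esub> \<one>\<^bsub>K\<^esub> = \<one>\<^bsub>K\<^esub>" by (metis emb_eq_iff emb_minus_1 emb_1)
  then show ?thesis by simp
next
  case False
  then have "odd p" using prime_ge_2_nat[OF prime_p] prime_odd_nat[OF prime_p] by simp
  have "(- 1) mod int p \<noteq> 1 mod int p" using False p_gt_1 by (simp add: zmod_minus1)
  then have "\<ominus>\<^bsub>K\<^esub> \<one>\<^bsub>K\<^esub> \<noteq> \<one>\<^bsub>K\<^esub>" using emb_eq_iff[of "- 1" 1] by (simp add: emb_minus_1)
  then show ?thesis
    using \<open>odd p\<close> p_gt_1 even_coprime_part_iff[of "p - 1" d] even_coprime_part_iff[of "p + 1" d]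
    by (simp add: K.minus_one_pow_eq_one_iff)
qed

definition roots_Fp_star :: "nat \<Rightarrow> (int \<times> int) set" where
  "roots_Fp_star d = {z \<in> Fp_star. z [^]\<^bsub>K\<^esub> coprime_part (p - 1) d = \<one>\<^bsub>K\<^esub>}"

definition roots_U :: "nat \<Rightarrow> (int \<times> int) set" where
  "roots_U d = {z \<in> U. z [^]\<^bsub>K\<^esub> coprime_part (p + 1) d = \<one>\<^bsub>K\<^esub>}"

lemma card_roots_Fp_star: "card (roots_Fp_star d) = coprime_part (p - 1) d"
  and card_roots_U: "card (roots_U d) = coprime_part (p + 1) d"
proof -
  have "p - 1 > 0" "p + 1 > 0" using p_gt_1 by auto
  then show "card (roots_Fp_star d) = coprime_part (p - 1) d" "card (roots_U d) = coprime_part (p + 1) d"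
    unfolding roots_Fp_star_def roots_U_def using coprime_part_pos coprime_part_dvd
    by (auto intro!: K.card_roots_of_unity_in_subgroup subgroup_Fp_star subgroup_U
             simp: card_Fp_star card_U)
qed

lemma power_periodic_eq_roots:
  assumes "d > 0"
  shows "{z \<in> Fp_star \<union> U. \<exists>k\<ge>1. z [^]\<^bsub>K\<^esub> (d ^ k) = z} = roots_Fp_star d \<union> roots_U d"
  using K.subgroup_power_map_periodic_iff[OF subgroup_Fp_star finite_Fp_star _ assms]
    K.subgroup_power_map_periodic_iff[OF subgroup_U finite_U _ assms]
  unfolding roots_Fp_star_def roots_U_def card_Fp_star card_U by blast

lemma roots_subset_Units: "roots_Fp_star d \<union> roots_U d \<subseteq> Units K"
  using Fp_star_Un_U_subset_Units by (auto simp: roots_Fp_star_def roots_U_def)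

lemma inv_in_roots:
  assumes z: "z \<in> roots_Fp_star d \<union> roots_U d"
  shows "inv\<^bsub>K\<^esub> z \<in> roots_Fp_star d \<union> roots_U d"
proof -
  have "z \<in> Units K" using z roots_subset_Units by blast
  then have inv_pow: "inv\<^bsub>K\<^esub> z [^]\<^bsub>K\<^esub> m = \<one>\<^bsub>K\<^esub>" if "z [^]\<^bsub>K\<^esub> m = \<one>\<^bsub>K\<^esub>" for m :: nat
    using that by (simp add: K.Units_inv_pow)
  show ?thesis
    using z inv_pow K.subgroup_mult_of_inv_closed[OF subgroup_Fp_star]
      K.subgroup_mult_of_inv_closed[OF subgroup_U]
    unfolding roots_Fp_star_def roots_U_def by blast
qed

lemma inv_fixed_roots:
  "{z \<in> roots_Fp_star d \<union> roots_U d. inv\<^bsub>K\<^esub> z = z} = roots_Fp_star d \<inter> roots_U d"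
proof -
  have "z \<in> roots_Fp_star d \<longleftrightarrow> z \<in> roots_U d" if "z \<in> Fp_star \<inter> U" for z
  proof -
    have "z = \<one>\<^bsub>K\<^esub> \<or> z = \<ominus>\<^bsub>K\<^esub> \<one>\<^bsub>K\<^esub>" using that Fp_star_Int_U by blast
    then show ?thesis
      using that minus_one_pow_coprime_parts[of d] by (auto simp: roots_Fp_star_def roots_U_def)
  qed
  moreover have "{z \<in> roots_Fp_star d \<union> roots_U d. inv\<^bsub>K\<^esub> z = z}
      = (roots_Fp_star d \<union> roots_U d) \<inter> (Fp_star \<inter> U)"
    using roots_subset_Units K.inv_eq_self_iff Fp_star_Int_U by blast
  moreover have "roots_Fp_star d \<inter> roots_U d \<subseteq> Fp_star \<inter> U"
    by (auto simp: roots_Fp_star_def roots_U_def)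
  ultimately show ?thesis by blast
qed

lemma two_card_Per_cheb_Fp:
  assumes "d > 0"
  shows "2 * card (Per (cheb_Fp p d) Fp) = coprime_part (p - 1) d + coprime_part (p + 1) d"
proof -
  let ?R = "roots_Fp_star d \<union> roots_U d"
  have fin: "finite (roots_Fp_star d)" "finite (roots_U d)"
    using finite_Fp_star finite_U by (simp_all add: roots_Fp_star_def roots_U_def)
  have "card (Per (cheb_Fp p d) Fp) = card (emb ` Per (cheb_Fp p d) Fp)"
    using inj_on_emb by (intro card_image[symmetric]) (auto simp: Per_def intro: inj_on_subset)
  also have "\<dots> = card (phi ` ?R)"
    by (simp only: emb_image_Per_cheb_Fp power_periodic_eq_roots[OF assms])
  finally have "2 * card (Per (cheb_Fp p d) Fp) = 2 * card (phi ` ?R)" by simp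
  also have "\<dots> = card ?R + card {z \<in> ?R. inv\<^bsub>K\<^esub> z = z}"
    unfolding phi_def using fin roots_subset_Units inv_in_roots
    by (intro K.two_card_add_inv_image) auto
  also have "\<dots> = card (roots_Fp_star d) + card (roots_U d)"
    unfolding inv_fixed_roots using card_Un_Int[OF fin] by simp
  finally show ?thesis by (simp add: card_roots_Fp_star card_roots_U)
qed
end

lemma cheb_P1_eq_map_option: "cheb_P1 p d = map_option (cheb_Fp p d)"
  by (rule ext) (simp add: cheb_P1_def split: option.split)

theorem mainTheorem1:
  fixes p d :: nat
  assumes "prime p" and "d > 1"
  defines "mm \<equiv> coprime_part (p - 1) d" and "mp \<equiv> coprime_part (p + 1) d"
  shows "real (card (Per (cheb_Fp p d) (A1_Fp p))) = (real mm + real mp) / 2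
       \<and> real (card (Per (cheb_P1 p d) (P1_Fp p))) = (real mm + real mp) / 2 + 1"
proof -
  obtain a b where "\<forall>t::int. (t * t - a * t - b) mod int p \<noteq> 0"
    using exists_irreducible_quadratic_mod prime_gt_1_nat[OF assms(1)] by blast
  then interpret quadratic_extension p a b
    using assms(1) by unfold_locales auto
  have A1: "2 * card (Per (cheb_Fp p d) (A1_Fp p)) = mm + mp"
    using two_card_Per_cheb_Fp assms(2) by (simp add: mm_def mp_def)
  have "finite (Per (cheb_Fp p d) (A1_Fp p))"
    by (rule finite_subset[of _ "A1_Fp p"]) (auto simp: Per_def A1_Fp_def)
  then have P1: "card (Per (cheb_P1 p d) (P1_Fp p)) = card (Per (cheb_Fp p d) (A1_Fp p)) + 1"
    by (simp add: P1_Fp_def cheb_P1_eq_map_option Per_map_option card_image)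
  show ?thesis using A1 P1 by simp
qed

end
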